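(* Let $\mathfrak A,\mathfrak B$ be $*$-algebras and let $\sigma,\tau:\mathfrak A\to\mathfrak B$ be $*$-linear mappings. Then every $*$-$(\sigma,\tau)$-derivation $d:\mathfrak A\to\mathfrak B$ is a $*$-$\frac{\sigma+\tau}{2}$-derivation, i.e. $d(ab)=d(a)\frac{\sigma+\tau}{2}(b)+\frac{\sigma+\tau}{2}(a)d(b)$ for all $a,b\in\mathfrak A$.
   Context: A map $\sigma$ between $*$-algebras is $*$-linear if it is linear and $\sigma(a^* )=\sigma(a)^*$. A $*$-$(\sigma,\tau)$-derivation is a linear map $d:\mathfrak A\to\mathfrak B$ with $d(a^* )=d(a)^*$ and $d(ab)=d(a)\sigma(b)+\tau(a)d(b)$ for all $a,b\in\mathfrak A$. For a linear map $\gamma:\mathfrak A\to\mathfrak B$, a $*$-$\gamma$-derivation is a $*$-preserving linear map $d$ with $d(ab)=d(a)\gamma(b)+\gamma(a)d(b)$ for all $a,b$. *)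

theory Defs
  imports Complex_Main
begin

class complex_algebra = ring +
  fixes scaleC :: "complex \<Rightarrow> 'a \<Rightarrow> 'a"
  assumes scaleC_add_right: "scaleC c (x + y) = scaleC c x + scaleC c y"
    and scaleC_add_left: "scaleC (c + e) x = scaleC c x + scaleC e x"
    and scaleC_scaleC: "scaleC c (scaleC e x) = scaleC (c * e) x"
    and scaleC_one: "scaleC 1 x = x"
    and mult_scaleC_left: "scaleC c x * y = scaleC c (x * y)"
    and mult_scaleC_right: "x * scaleC c y = scaleC c (x * y)"

class star_algebra = complex_algebra +
  fixes adj :: "'a \<Rightarrow> 'a"
  assumes adj_adj: "adj (adj x) = x"
    and adj_add: "adj (x + y) = adj x + adj y"
    and adj_scaleC: "adj (scaleC c x) = scaleC (cnj c) (adj x)"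
    and adj_mult: "adj (x * y) = adj y * adj x"

definition clinear_map :: "('a::complex_algebra \<Rightarrow> 'b::complex_algebra) \<Rightarrow> bool" where
  "clinear_map f \<longleftrightarrow> (\<forall>x y. f (x + y) = f x + f y) \<and> (\<forall>c x. f (scaleC c x) = scaleC c (f x))"

definition star_linear :: "('a::star_algebra \<Rightarrow> 'b::star_algebra) \<Rightarrow> bool" where
  "star_linear f \<longleftrightarrow> clinear_map f \<and> (\<forall>a. f (adj a) = adj (f a))"

definition star_sigma_tau_derivation ::
  "('a::star_algebra \<Rightarrow> 'b::star_algebra) \<Rightarrow> ('a \<Rightarrow> 'b) \<Rightarrow> ('a \<Rightarrow> 'b) \<Rightarrow> bool" where
  "star_sigma_tau_derivation \<sigma> \<tau> d \<longleftrightarrow> clinear_map d \<and> (\<forall>a. d (adj a) = adj (d a)) \<and>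
     (\<forall>a b. d (a * b) = d a * \<sigma> b + \<tau> a * d b)"

definition star_gamma_derivation ::
  "('a::star_algebra \<Rightarrow> 'b::star_algebra) \<Rightarrow> ('a \<Rightarrow> 'b) \<Rightarrow> bool" where
  "star_gamma_derivation \<gamma> d \<longleftrightarrow> clinear_map d \<and> (\<forall>a. d (adj a) = adj (d a)) \<and>
     (\<forall>a b. d (a * b) = d a * \<gamma> b + \<gamma> a * d b)"

end

theory Submission
  imports Defs
begin

text \<open>Applying the involution to the product rule for \<open>d (adj b * adj a)\<close> shows that a
  \<open>*\<close>-\<open>(\<sigma>,\<tau>)\<close>-derivation is also a \<open>*\<close>-\<open>(\<tau>,\<sigma>)\<close>-derivation; averaging the two product
  rules gives the product rule for \<open>(\<sigma> + \<tau>)/2\<close>.\<close>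

lemma scaleC_half_double: "scaleC (1/2) (z + z) = (z::'a::complex_algebra)"
proof -
  have "scaleC (1/2) (z + z) = scaleC (1/2 + 1/2) z"
    by (simp only: scaleC_add_right scaleC_add_left)
  then show ?thesis by (simp add: scaleC_one)
qed

lemma product_rule_average:
  fixes d \<sigma> \<tau> :: "'a::ring \<Rightarrow> 'b::complex_algebra"
  assumes "d (a * b) = d a * \<sigma> b + \<tau> a * d b"
    and "d (a * b) = d a * \<tau> b + \<sigma> a * d b"
  shows "d (a * b) = d a * scaleC (1/2) (\<sigma> b + \<tau> b) + scaleC (1/2) (\<sigma> a + \<tau> a) * d b"
proof -
  have "d a * scaleC (1/2) (\<sigma> b + \<tau> b) + scaleC (1/2) (\<sigma> a + \<tau> a) * d b
      = scaleC (1/2) ((d a * \<sigma> b + \<tau> a * d b) + (d a * \<tau> b + \<sigma> a * d b))"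
    by (simp only: mult_scaleC_left mult_scaleC_right distrib_left distrib_right
        scaleC_add_right add_ac)
  also have "\<dots> = d (a * b)"
    using assms by (simp add: scaleC_half_double)
  finally show ?thesis by simp
qed

lemma star_sigma_tau_derivation_swap:
  assumes "star_sigma_tau_derivation \<sigma> \<tau> d"
    and \<sigma>_adj: "\<And>a. \<sigma> (adj a) = adj (\<sigma> a)"
    and \<tau>_adj: "\<And>a. \<tau> (adj a) = adj (\<tau> a)"
  shows "star_sigma_tau_derivation \<tau> \<sigma> d"
proof -
  have d_adj: "\<And>a. d (adj a) = adj (d a)"
    and product_rule: "\<And>a b. d (a * b) = d a * \<sigma> b + \<tau> a * d b"
    using assms(1) by (auto simp: star_sigma_tau_derivation_def)
  have "d (a * b) = d a * \<tau> b + \<sigma> a * d b" for a b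
  proof -
    have "d (a * b) = adj (adj (d (a * b)))"
      by (simp only: adj_adj)
    also have "\<dots> = adj (d (adj b * adj a))"
      by (simp only: adj_mult[symmetric] d_adj)
    also have "\<dots> = adj (d (adj b) * \<sigma> (adj a) + \<tau> (adj b) * d (adj a))"
      by (simp add: product_rule)
    also have "\<dots> = \<sigma> a * d b + d a * \<tau> b"
      by (simp only: d_adj \<sigma>_adj \<tau>_adj adj_add adj_mult adj_adj add.commute)
    finally show ?thesis by (simp only: add.commute)
  qed
  with assms(1) show ?thesis
    by (simp add: star_sigma_tau_derivation_def)
qed

theorem proposition3p1:
  fixes \<sigma> \<tau> d :: "'a::star_algebra \<Rightarrow> 'b::star_algebra"
  assumes "star_linear \<sigma>" and "star_linear \<tau>"
    and "star_sigma_tau_derivation \<sigma> \<tau> d"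
  shows "star_gamma_derivation (\<lambda>a. scaleC (1/2) (\<sigma> a + \<tau> a)) d"
proof -
  have "star_sigma_tau_derivation \<tau> \<sigma> d"
    using assms unfolding star_linear_def by (blast intro: star_sigma_tau_derivation_swap)
  with assms(3) show ?thesis
    unfolding star_sigma_tau_derivation_def star_gamma_derivation_def
    by (blast intro: product_rule_average)
qed

end
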